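(* For each odd prime $p$ there are infinitely many primes $q$ with $q\equiv1\pmod p$ such that $q\not\equiv1\pmod{p^2}$ and $p$ is not a $p$-th power modulo $q$. *)

theory Defs
  imports "HOL-Number_Theory.Number_Theory"
begin

end

theory Submission
  imports Defs
begin

text \<open>
  Given finitely many primes with product \<open>c\<close>, put \<open>a = p c\<^sup>p\<close> and \<open>N = 1 + a + \<dots> + a\<^bsup>p-1\<^esup>\<close>.
  Since \<open>N \<equiv> 1 + a \<not>\<equiv> 1 (mod p\<^sup>2)\<close>, some prime factor \<open>q\<close> of \<open>N\<close> has \<open>q \<not>\<equiv> 1 (mod p\<^sup>2)\<close>;
  as \<open>N \<equiv> 1 (mod p)\<close>, \<open>q \<noteq> p\<close>, so \<open>a\<close> has order exactly \<open>p\<close> modulo \<open>q\<close> and \<open>q \<equiv> 1 (mod p)\<close>.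
  If \<open>p\<close> were a \<open>p\<close>-th power modulo \<open>q\<close>, then so would be \<open>a\<close>, whence \<open>a\<^bsup>(q-1)/p\<^esup> \<equiv> 1\<close> and
  \<open>p\<^sup>2\<close> would divide \<open>q - 1\<close>. Finally \<open>q\<close> does not divide \<open>a\<close>, so it is none of the given primes.
\<close>

lemma cong_1_if_prime_factors_cong_1:
  fixes n m :: nat
  assumes "n \<noteq> 0" and "\<And>q. prime q \<Longrightarrow> q dvd n \<Longrightarrow> [q = 1] (mod m)"
  shows "[n = 1] (mod m)"
  using assms
proof (induction n rule: prime_divisors_induct)
  case (factor q n)
  then have "[q * n = 1 * 1] (mod m)"
    by (intro cong_mult) auto
  then show ?case by simp
qed simp_all

lemma geometric_sum_cong_mod_square:
  fixes a :: nat
  assumes "2 \<le> n"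
  shows "[(\<Sum>i<n. a ^ i) = 1 + a] (mod a\<^sup>2)"
proof -
  obtain m where n: "n = Suc (Suc m)"
    using assms by (metis add_2_eq_Suc le_Suc_ex)
  have "(\<Sum>i<n. a ^ i) = a\<^sup>2 * (\<Sum>i<m. a ^ i) + (1 + a)"
    unfolding n
    by (simp add: sum.lessThan_Suc_shift sum_distrib_left power2_eq_square algebra_simps
             del: sum.lessThan_Suc)
  then show ?thesis
    by (simp only: cong_def mod_mult_self4)
qed

lemma geometric_sum_power_cong_1:
  fixes a q :: nat
  assumes "q dvd (\<Sum>i<n. a ^ i)"
  shows "[a ^ n = 1] (mod q)"
proof -
  have "int (a ^ n) - int 1 = (int a - 1) * int (\<Sum>i<n. a ^ i)"
    by (simp add: power_diff_1_eq)
  moreover have "int q dvd int (\<Sum>i<n. a ^ i)"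
    using assms by (simp only: int_dvd_int_iff)
  ultimately have "int q dvd int (a ^ n) - int 1"
    by (metis dvd_mult)
  then show ?thesis
    by (simp only: cong_int_iff [symmetric] cong_iff_dvd_diff)
qed

lemma ord_eq_prime_if_prime_dvd_geometric_sum:
  fixes a p q :: nat
  assumes "prime p" and "prime q" and "q \<noteq> p" and q_dvd: "q dvd (\<Sum>i<p. a ^ i)"
  shows "ord q a = p"
proof -
  have "ord q a dvd p"
    using geometric_sum_power_cong_1 [OF q_dvd] by (simp add: ord_divides')
  moreover have "\<not> [a = 1] (mod q)"
  proof
    assume "[a = 1] (mod q)"
    then have "[(\<Sum>i<p. a ^ i) = (\<Sum>i<p. 1 ^ i)] (mod q)"
      by (intro cong_sum cong_pow)
    then have "q dvd p"
      using q_dvd by (simp add: cong_dvd_iff)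
    then show False
      using assms by (simp add: primes_dvd_imp_eq)
  qed
  then have "ord q a \<noteq> 1"
    using ord_eq_Suc_0_iff by simp
  ultimately show ?thesis
    using \<open>prime p\<close> unfolding prime_nat_iff by auto
qed

lemma ord_dvd_div_if_power_residue:
  fixes a p q y :: nat
  assumes "prime q" and "p dvd q - 1" and "[y ^ p = a] (mod q)" and "\<not> q dvd y"
  shows "ord q a dvd (q - 1) div p"
proof -
  have "[a ^ ((q - 1) div p) = (y ^ p) ^ ((q - 1) div p)] (mod q)"
    using assms(3) by (intro cong_pow) (rule cong_sym)
  also have "(y ^ p) ^ ((q - 1) div p) = y ^ (q - 1)"
    using assms(2) by (simp flip: power_mult)
  also have "[y ^ (q - 1) = 1] (mod q)"
    using fermat_theorem assms(1,4) by blast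
  finally show ?thesis
    by (simp only: ord_divides)
qed

lemma prime_cong_1_mod_ord:
  fixes a q :: nat
  assumes "prime q" and "coprime q a"
  shows "[q = 1] (mod ord q a)"
proof -
  have "ord q a dvd q - 1"
    using order_divides_totient [OF assms(2)] assms(1) by (simp add: totient_prime)
  then show ?thesis
    using assms(1) prime_ge_1_nat cong_altdef_nat by blast
qed

lemma cong_1_mod_square_if_ord_prime_power_residue:
  fixes a p q y :: nat
  assumes "prime p" and "prime q" and ord_a: "ord q a = p" and y: "[y ^ p = a] (mod q)"
  shows "[q = 1] (mod p\<^sup>2)"
proof -
  have "coprime q a"
    using assms(1) ord_a ord_gt_0_iff prime_gt_0_nat by metis
  then have "p dvd q - 1"
    using prime_cong_1_mod_ord assms(2) ord_a prime_ge_1_nat cong_altdef_nat by metis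
  have "\<not> q dvd y"
  proof
    assume "q dvd y"
    then have "q dvd y ^ p"
      using assms(1,2) by (simp add: prime_dvd_power_iff prime_gt_0_nat)
    with y have "q dvd a"
      by (simp add: cong_dvd_iff)
    with \<open>coprime q a\<close> assms(2) show False
      by (metis coprime_absorb_left not_prime_unit)
  qed
  then have "p dvd (q - 1) div p"
    using ord_dvd_div_if_power_residue assms(2) \<open>p dvd q - 1\<close> y ord_a by metis
  then have "p\<^sup>2 dvd q - 1"
    using \<open>p dvd q - 1\<close> assms(1) by (simp add: dvd_div_iff_mult power2_eq_square)
  then show ?thesis
    using assms(2) prime_ge_1_nat cong_altdef_nat by blast
qed

lemma exists_prime_not_dvd:
  fixes p c :: nat
  assumes p: "prime p" and "coprime p c"
  shows "\<exists>q. prime q \<and> [q = 1] (mod p) \<and> \<not> [q = 1] (mod p\<^sup>2)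
             \<and> \<not> (\<exists>x :: nat. [x ^ p = p] (mod q)) \<and> \<not> q dvd c"
proof -
  define a where "a = p * c ^ p"
  define N where "N = (\<Sum>i<p. a ^ i)"
  have "2 \<le> p"
    using p by (simp add: prime_ge_2_nat)
  have N_cong: "[N = 1 + a] (mod p\<^sup>2)"
    unfolding N_def using geometric_sum_cong_mod_square [OF \<open>2 \<le> p\<close>, of a]
    by (rule cong_dvd_modulus_nat) (simp add: a_def power_mult_distrib)
  have "\<not> [N = 1] (mod p\<^sup>2)"
  proof
    assume "[N = 1] (mod p\<^sup>2)"
    with N_cong have "[1 + a = 1 + 0] (mod p\<^sup>2)"
      by (metis add.right_neutral cong_sym cong_trans)
    then have "p * p dvd p * c ^ p"
      by (simp only: cong_add_lcancel_nat) (simp add: cong_0_iff a_def power2_eq_square)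
    then have "p dvd c"
      using p prime_dvd_power [of p c p] by (simp add: prime_gt_0_nat)
    then show False
      using assms by (metis coprime_absorb_left not_prime_unit)
  qed
  moreover have "N \<noteq> 0"
    using \<open>2 \<le> p\<close> unfolding N_def by (auto intro!: bexI [of _ 0])
  ultimately obtain q where q: "prime q" "q dvd N" "\<not> [q = 1] (mod p\<^sup>2)"
    using cong_1_if_prime_factors_cong_1 by blast
  have "[N = 1 + a] (mod p)"
    using N_cong by (rule cong_dvd_modulus_nat) simp
  also have "[1 + a = 1 + 0] (mod p)"
    by (intro cong_add) (auto simp: a_def cong_0_iff)
  finally have "q \<noteq> p"
    using q(2) p by (auto simp: cong_dvd_iff)
  then have ord_a: "ord q a = p"
    using ord_eq_prime_if_prime_dvd_geometric_sum p q(1,2) unfolding N_def by blast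
  then have "coprime q a"
    using p ord_gt_0_iff prime_gt_0_nat by metis
  then have "[q = 1] (mod p)"
    using prime_cong_1_mod_ord q(1) ord_a by metis
  moreover have "\<not> (\<exists>x :: nat. [x ^ p = p] (mod q))"
  proof
    assume "\<exists>x :: nat. [x ^ p = p] (mod q)"
    then obtain x :: nat where "[x ^ p = p] (mod q)" ..
    then have "[(x * c) ^ p = a] (mod q)"
      unfolding a_def power_mult_distrib by (intro cong_mult) auto
    then show False
      using cong_1_mod_square_if_ord_prime_power_residue p q(1,3) ord_a by blast
  qed
  moreover have "\<not> q dvd c"
    using \<open>coprime q a\<close> q(1) \<open>2 \<le> p\<close>
    by (auto simp: a_def prime_dvd_power_iff dest: coprime_common_divisor)
  ultimately show ?thesis
    using q by blast
qed

theorem proposition5p4: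
  fixes p :: nat
  assumes "prime p" and "odd p"
  shows "infinite {q :: nat. prime q \<and> [q = 1] (mod p) \<and> \<not> [q = 1] (mod p^2)
                     \<and> \<not> (\<exists>x :: nat. [x ^ p = p] (mod q))}"
  (is "infinite ?A")
  \<comment> \<open>The argument does not need \<open>p\<close> to be odd.\<close>
proof
  assume fin: "finite ?A"
  have "coprime p (\<Prod>?A)"
  proof (rule prod_coprime_right)
    fix q assume "q \<in> ?A"
    then have "prime q" "q \<noteq> p"
      using prime_gt_1_nat [OF \<open>prime p\<close>] by (auto simp: cong_def)
    then show "coprime p q"
      using \<open>prime p\<close> by (simp add: primes_coprime)
  qed
  then obtain q where q: "q \<in> ?A" "\<not> q dvd \<Prod>?A"
    using exists_prime_not_dvd [OF \<open>prime p\<close>] by blast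
  have "q dvd \<Prod>?A"
    using fin q(1) by (rule dvd_prodI)
  with q(2) show False ..
qed

end
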